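(* There is an absolute constant $C$ such that for all positive integers $n$, $\mathrm{sf}(\Lambda(R\cup L))\le 2^{Cn}\, s(\lfloor0.15n\rfloor)^{0.8n}$.
   Context: $R=\{(x,y)\in\mathbb{R}^2:0.7n\le x+y\le n,\ |x-y|\le0.8n\}$, $L=\{(x,y)\in\mathbb{R}^2:2\lceil0.7n\rceil\le x+y\le1.7n,\ |x-y|\le0.4n\}$, $\Lambda(X)=\mathbb{Z}^2\cap X$. $\mathrm{sf}(Y)$ is the number of sum-free subsets of $Y$ (no $a,b,c$, not necessarily distinct, with $a+b=c$, coordinatewise addition). For $m\ge 0$, $s(m)=\mathrm{sf}(\{1,3,4\}\times[m])$ where $[m]=\{1,\dots,m\}$, viewed as a subset of $\mathbb{Z}^2$. *)

theory Defs
  imports Complex_Main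
begin

definition padd :: "int \<times> int \<Rightarrow> int \<times> int \<Rightarrow> int \<times> int" where
  "padd a b = (fst a + fst b, snd a + snd b)"

definition sum_free :: "(int \<times> int) set \<Rightarrow> bool" where
  "sum_free A \<longleftrightarrow> (\<forall>a\<in>A. \<forall>b\<in>A. \<forall>c\<in>A. padd a b \<noteq> c)"

definition sf :: "(int \<times> int) set \<Rightarrow> nat" where
  "sf Y = card {A. A \<subseteq> Y \<and> sum_free A}"

definition regionR :: "nat \<Rightarrow> (real \<times> real) set" where
  "regionR n = {(x, y). 0.7 * real n \<le> x + y \<and> x + y \<le> real n \<and> \<bar>x - y\<bar> \<le> 0.8 * real n}"

definition regionL :: "nat \<Rightarrow> (real \<times> real) set" where
  "regionL n = {(x, y). 2 * real_of_int \<lceil>0.7 * real n\<rceil> \<le> x + y \<and> x + y \<le> 1.7 * real n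
                 \<and> \<bar>x - y\<bar> \<le> 0.4 * real n}"

definition Lam :: "(real \<times> real) set \<Rightarrow> (int \<times> int) set" where
  "Lam X = {p. (real_of_int (fst p), real_of_int (snd p)) \<in> X}"

definition s_fun :: "nat \<Rightarrow> nat" where
  "s_fun m = sf ({1, 3, 4} \<times> {1 .. int m})"

end

theory Submission
  imports Defs
begin

text \<open>Let c = \<lceil>0.7n\<rceil>, N = \<lfloor>0.4n\<rfloor> and m = \<lfloor>0.15n\<rfloor>. For each i \<in> [1, 2N] choose lattice points
  P, Q just below the anti-diagonal x + y = c on the lines x - y = i and x - y = partner N i.
  The "ladder" (P, Q, P + Q) + {(j, j) : 1 \<le> j \<le> m} is an additive copy of {1,3,4} \<times> [m], so it
  carries at most s(m) sum-free sets. The P- and Q-rows of the 2N ladders sweep R (whose height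
  n - c is about 2m), and the (P + Q)-rows, which start at height 2c, sweep L. Only O(n) points of
  R \<union> L are missed; since sf is submultiplicative under unions, sf(\<Lambda>(R \<union> L)) \<le> 2^O(n) s(m)^2N
  and 2N \<le> 0.8n.\<close>

lemma sum_free_subset: "sum_free B \<Longrightarrow> A \<subseteq> B \<Longrightarrow> sum_free A"
  unfolding sum_free_def by blast

lemma finite_sum_free_subsets: "finite B \<Longrightarrow> finite {S. S \<subseteq> B \<and> sum_free S}"
  by (rule finite_subset[of _ "Pow B"]) auto

lemma sf_mono: "finite B \<Longrightarrow> A \<subseteq> B \<Longrightarrow> sf A \<le> sf B"
  unfolding sf_def by (rule card_mono[OF finite_sum_free_subsets]) auto

lemma sf_le_two_power_card: "finite A \<Longrightarrow> sf A \<le> 2 ^ card A"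
proof -
  assume "finite A"
  then have "sf A \<le> card (Pow A)"
    unfolding sf_def by (intro card_mono) auto
  with \<open>finite A\<close> show ?thesis by (simp add: card_Pow)
qed

lemma sf_pos: "finite A \<Longrightarrow> 1 \<le> sf A"
proof -
  assume "finite A"
  moreover have "{} \<in> {S. S \<subseteq> A \<and> sum_free S}" by (simp add: sum_free_def)
  ultimately have "card {S. S \<subseteq> A \<and> sum_free S} \<noteq> 0"
    using finite_sum_free_subsets by (simp add: card_eq_0_iff) blast
  then show ?thesis unfolding sf_def by simp
qed

lemma sf_Un_le:
  assumes "finite A" "finite B"
  shows "sf (A \<union> B) \<le> sf A * sf B"
proof -
  have "sf (A \<union> B) \<le> card ({S. S \<subseteq> A \<and> sum_free S} \<times> {S. S \<subseteq> B \<and> sum_free S})"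
    unfolding sf_def
  proof (rule card_inj_on_le)
    show "inj_on (\<lambda>S. (S \<inter> A, S \<inter> B)) {S. S \<subseteq> A \<union> B \<and> sum_free S}"
      by (rule inj_onI) auto
  qed (use sum_free_subset finite_sum_free_subsets assms in auto)
  then show ?thesis by (simp add: card_cartesian_product sf_def)
qed

lemma sf_UN_le:
  "finite I \<Longrightarrow> (\<And>i. i \<in> I \<Longrightarrow> finite (F i)) \<Longrightarrow> sf (\<Union>i\<in>I. F i) \<le> (\<Prod>i\<in>I. sf (F i))"
proof (induction I rule: finite_induct)
  case empty
  have "{S. S \<subseteq> {} \<and> sum_free S} = {{}}" by (auto simp: sum_free_def)
  then show ?case by (simp add: sf_def)
next
  case (insert i I)
  have "sf (\<Union>j\<in>insert i I. F j) \<le> sf (F i) * sf (\<Union>j\<in>I. F j)"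
    using sf_Un_le insert.prems insert.hyps(1) by simp
  also have "\<dots> \<le> sf (F i) * (\<Prod>j\<in>I. sf (F j))"
    using insert by simp
  finally show ?case using insert.hyps by simp
qed

text \<open>A sum-free S \<subseteq> f ` D is recovered from its pull-back D \<inter> f -` S, which is sum-free.\<close>
lemma sf_image_le:
  assumes "finite D"
    and additive: "\<And>a b c. a \<in> D \<Longrightarrow> b \<in> D \<Longrightarrow> c \<in> D \<Longrightarrow> padd a b = c \<Longrightarrow> padd (f a) (f b) = f c"
  shows "sf (f ` D) \<le> sf D"
  unfolding sf_def
proof (rule card_inj_on_le)
  let ?pull = "\<lambda>S. D \<inter> f -` S"
  have recover: "f ` ?pull S = S" if "S \<subseteq> f ` D" for S
    using that by blast
  show "inj_on ?pull {S. S \<subseteq> f ` D \<and> sum_free S}"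
    by (rule inj_onI) (metis (no_types, lifting) mem_Collect_eq recover)
  have "sum_free (?pull S)" if "sum_free S" for S
    using that additive unfolding sum_free_def by (metis IntD1 IntD2 vimageE)
  then show "?pull ` {S. S \<subseteq> f ` D \<and> sum_free S} \<subseteq> {S. S \<subseteq> D \<and> sum_free S}"
    by blast
qed (use assms finite_sum_free_subsets in blast)

definition ladder_map :: "int \<times> int \<Rightarrow> int \<times> int \<Rightarrow> int \<times> int \<Rightarrow> int \<times> int" where
  "ladder_map P Q d =
     padd (if fst d = 1 then P else if fst d = 3 then Q else padd P Q) (snd d, snd d)"

definition ladder :: "int \<times> int \<Rightarrow> int \<times> int \<Rightarrow> nat \<Rightarrow> (int \<times> int) set" where
  "ladder P Q m = ladder_map P Q ` ({1, 3, 4} \<times> {1 .. int m})"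

text \<open>Row 4 goes to P + Q, so the only additive relation 1 + 3 = 4 among the rows is preserved.\<close>
lemma ladder_map_padd:
  assumes "fst a \<in> {1, 3, 4}" "fst b \<in> {1, 3, 4}" "fst c \<in> {1, 3, 4}" "padd a b = c"
  shows "padd (ladder_map P Q a) (ladder_map P Q b) = ladder_map P Q c"
proof -
  have "fst a + fst b = fst c" "snd a + snd b = snd c"
    using assms(4) by (auto simp: padd_def)
  with assms(1-3) have "fst a = 1 \<and> fst b = 3 \<or> fst a = 3 \<and> fst b = 1"
    by auto
  with \<open>fst a + fst b = fst c\<close> \<open>snd a + snd b = snd c\<close> show ?thesis
    by (auto simp: ladder_map_def padd_def)
qed

lemma sf_ladder_le: "sf (ladder P Q m) \<le> s_fun m"
  unfolding ladder_def s_fun_def by (rule sf_image_le) (auto intro: ladder_map_padd)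

lemma ladder_memI:
  assumes "1 \<le> j" "j \<le> int m"
  shows "padd P (j, j) \<in> ladder P Q m" "padd Q (j, j) \<in> ladder P Q m"
    "padd (padd P Q) (j, j) \<in> ladder P Q m"
  unfolding ladder_def
  by (rule rev_image_eqI[of "(1, j)"] rev_image_eqI[of "(3, j)"] rev_image_eqI[of "(4, j)"];
      use assms in \<open>simp add: ladder_map_def\<close>)+

lemma diagonal_translate:
  fixes P :: "int \<times> int"
  assumes "x - y = fst P - snd P" "fst P + snd P < x + y" "x + y < fst P + snd P + 2 * int m + 2"
  shows "\<exists>j. 1 \<le> j \<and> j \<le> int m \<and> (x, y) = padd P (j, j)"
proof (intro exI conjI)
  have "x + y - (fst P + snd P) = 2 * (x - fst P)"
    using assms(1) by simp
  with assms(2,3) show "1 \<le> x - fst P" and "x - fst P \<le> int m"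
    by presburger+
  show "(x, y) = padd P (x - fst P, x - fst P)"
    using assms(1) by (simp add: padd_def)
qed

text \<open>The last lattice point below the anti-diagonal x + y = c on the line x - y = v.\<close>
definition base_point :: "int \<Rightarrow> int \<Rightarrow> int \<times> int" where
  "base_point c v = ((c + v + 1) div 2 - 1, (c + v + 1) div 2 - 1 - v)"

lemma base_point_diff: "fst (base_point c v) - snd (base_point c v) = v"
  by (simp add: base_point_def)

lemma base_point_sum:
  "c - 2 \<le> fst (base_point c v) + snd (base_point c v)"
  "fst (base_point c v) + snd (base_point c v) \<le> c - 1"
  unfolding base_point_def by simp_all

text \<open>As i runs through [1, 2N], partner N i runs through [-2N, 0] without -N, and
  i + partner N i through (-N, N].\<close>
definition partner :: "int \<Rightarrow> int \<Rightarrow> int" where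
  "partner N i = (if i \<le> N then i - N else i - 3 * N - 1)"

lemma partner_onto:
  assumes "- 2 * N \<le> v" "v \<le> 0" "v \<noteq> - N"
  obtains i where "i \<in> {1 .. 2 * N}" "partner N i = v"
proof (cases "v < - N")
  case True
  with assms show ?thesis by (intro that[of "v + 3 * N + 1"]) (auto simp: partner_def)
next
  case False
  with assms show ?thesis by (intro that[of "v + N"]) (auto simp: partner_def)
qed

lemma partner_sum_onto:
  assumes "- N < v" "v \<le> N"
  obtains i where "i \<in> {1 .. 2 * N}" "i + partner N i = v"
proof (cases "even (v + N)")
  case True
  then obtain i where "v + N = 2 * i" by blast
  with assms show ?thesis by (intro that[of i]) (auto simp: partner_def)
next
  case False
  then have "even (v + 3 * N + 1)" by simp
  then obtain i where "v + 3 * N + 1 = 2 * i" by blast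
  with assms show ?thesis by (intro that[of i]) (auto simp: partner_def)
qed

definition ladders :: "int \<Rightarrow> int \<Rightarrow> nat \<Rightarrow> (int \<times> int) set" where
  "ladders c N m = (\<Union>i\<in>{1 .. 2 * N}. ladder (base_point c i) (base_point c (partner N i)) m)"

lemma sf_ladders_le: "sf (ladders c N m) \<le> s_fun m ^ nat (2 * N)"
proof -
  have "sf (ladders c N m)
      \<le> (\<Prod>i\<in>{1 .. 2 * N}. sf (ladder (base_point c i) (base_point c (partner N i)) m))"
    unfolding ladders_def by (rule sf_UN_le) (auto simp: ladder_def)
  also have "\<dots> \<le> (\<Prod>i\<in>{1 .. 2 * N}. s_fun m)"
    by (rule prod_mono) (simp add: sf_ladder_le)
  finally show ?thesis by simp
qed

lemma finite_ladders: "finite (ladders c N m)"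
  unfolding ladders_def ladder_def by simp

lemma ladders_cover_lower:
  assumes "c \<le> x + y" "x + y < c + 2 * int m" "\<bar>x - y\<bar> \<le> 2 * N" "x - y \<noteq> - N"
  shows "(x, y) \<in> ladders c N m"
proof -
  obtain j where j: "1 \<le> j" "j \<le> int m" "(x, y) = padd (base_point c (x - y)) (j, j)"
    using diagonal_translate[of x y "base_point c (x - y)" m] assms(1,2)
      base_point_diff base_point_sum[of c "x - y"] by force
  show ?thesis
  proof (cases "0 < x - y")
    case True
    with assms(3) have "x - y \<in> {1 .. 2 * N}" by simp
    with j ladder_memI(1) show ?thesis unfolding ladders_def by fastforce
  next
    case False
    obtain i where "i \<in> {1 .. 2 * N}" "partner N i = x - y"
      by (rule partner_onto[of N "x - y"]) (use assms(3,4) False in auto)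
    with j ladder_memI(2) show ?thesis unfolding ladders_def by fastforce
  qed
qed

lemma ladders_cover_upper:
  assumes "2 * c \<le> x + y" "x + y < 2 * c + 2 * int m - 2" "- N < x - y" "x - y \<le> N"
  shows "(x, y) \<in> ladders c N m"
proof -
  obtain i where i: "i \<in> {1 .. 2 * N}" "i + partner N i = x - y"
    using partner_sum_onto assms(3,4) by blast
  let ?P = "base_point c i" and ?Q = "base_point c (partner N i)"
  have "fst (padd ?P ?Q) - snd (padd ?P ?Q) = x - y"
    using i(2) base_point_diff[of c] by (simp add: padd_def algebra_simps)
  moreover have "2 * c - 4 \<le> fst (padd ?P ?Q) + snd (padd ?P ?Q)"
    "fst (padd ?P ?Q) + snd (padd ?P ?Q) \<le> 2 * c - 2"
    using base_point_sum[of c i] base_point_sum[of c "partner N i"] by (simp_all add: padd_def)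
  ultimately obtain j where "1 \<le> j" "j \<le> int m" "(x, y) = padd (padd ?P ?Q) (j, j)"
    using diagonal_translate[of x y "padd ?P ?Q" m] assms(1,2) by force
  with i(1) ladder_memI(3) show ?thesis unfolding ladders_def by fastforce
qed

definition sum_diff :: "int \<times> int \<Rightarrow> int \<times> int" where
  "sum_diff p = (fst p + snd p, fst p - snd p)"

lemma inj_sum_diff: "inj sum_diff"
  by (rule injI) (auto simp: sum_diff_def prod_eq_iff)

text \<open>In the coordinates (x + y, x - y): the points near the upper ends of the ladders and the
  lines x - y = -N, x - y = \<plusminus>(2N + 1) that the ladders miss.\<close>
definition exceptional :: "nat \<Rightarrow> int \<Rightarrow> int \<Rightarrow> nat \<Rightarrow> (int \<times> int) set" where
  "exceptional n c N m = sum_diff -`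
     (({c + 2 * int m .. c + 2 * int m + 2} \<union> {2 * c + 2 * int m - 2 .. 2 * c + 2 * int m + 2})
        \<times> {- 2 * int n .. 2 * int n}
      \<union> {0 .. 2 * int n} \<times> {- N, 2 * N + 1, - 2 * N - 1})"

lemma finite_exceptional: "finite (exceptional n c N m)"
  unfolding exceptional_def by (intro finite_vimageI inj_sum_diff) auto

lemma card_exceptional: "card (exceptional n c N m) \<le> 38 * n + 11"
proof -
  let ?S = "{c + 2 * int m .. c + 2 * int m + 2} \<union> {2 * c + 2 * int m - 2 .. 2 * c + 2 * int m + 2}"
  let ?V = "{- N, 2 * N + 1, - 2 * N - 1}"
  have "card ?S \<le> 8"
    using card_Un_le[of "{c + 2 * int m .. c + 2 * int m + 2}"
        "{2 * c + 2 * int m - 2 .. 2 * c + 2 * int m + 2}"] by simp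
  moreover have "card {- 2 * int n .. 2 * int n} = 4 * n + 1"
    by (simp add: nat_add_distrib nat_mult_distrib)
  ultimately have S: "card (?S \<times> {- 2 * int n .. 2 * int n}) \<le> 8 * (4 * n + 1)"
    by (simp only: card_cartesian_product mult_right_mono)
  have "card ?V \<le> 3"
    by (simp add: card_insert_le_m1)
  moreover have "card {0 .. 2 * int n} = 2 * n + 1"
    by (simp add: nat_add_distrib nat_mult_distrib)
  ultimately have V: "card ({0 .. 2 * int n} \<times> ?V) \<le> (2 * n + 1) * 3"
    by (simp only: card_cartesian_product mult_left_mono)
  have "finite (?S \<times> {- 2 * int n .. 2 * int n} \<union> {0 .. 2 * int n} \<times> ?V)"
    by simp
  from card_vimage_inj_on_le[OF inj_sum_diff this]
  have "card (exceptional n c N m) \<le> card (?S \<times> {- 2 * int n .. 2 * int n} \<union> {0 .. 2 * int n} \<times> ?V)"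
    unfolding exceptional_def by (simp only: Int_UNIV_right)
  also have "\<dots> \<le> 8 * (4 * n + 1) + (2 * n + 1) * 3"
    using card_Un_le S V by (meson add_mono order_trans)
  finally show ?thesis by simp
qed

lemma sf_exceptional_le:
  assumes "0 < n"
  shows "sf (exceptional n c N m) \<le> 2 ^ (49 * n)"
proof -
  have "sf (exceptional n c N m) \<le> 2 ^ card (exceptional n c N m)"
    by (rule sf_le_two_power_card[OF finite_exceptional])
  also have "\<dots> \<le> 2 ^ (49 * n)"
    using card_exceptional[of n c N m] assms by (intro power_increasing) auto
  finally show ?thesis .
qed

lemma Lam_regionR_subset:
  assumes "0 < n" and c: "c = \<lceil>0.7 * real n\<rceil>" and N: "N = \<lfloor>0.4 * real n\<rfloor>"
    and m: "m = nat \<lfloor>0.15 * real n\<rfloor>"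
  shows "Lam (regionR n) \<subseteq> exceptional n c N m \<union> ladders c N m"
proof (rule subrelI)
  fix x y assume "(x, y) \<in> Lam (regionR n)"
  then have r: "0.7 * real n \<le> x + y" "x + y \<le> int n" "\<bar>x - y\<bar> \<le> 0.8 * real n"
    unfolding Lam_def regionR_def by auto
  have "c \<le> x + y"
    using r(1) unfolding c by (simp add: ceiling_le_iff)
  have "\<bar>x - y\<bar> \<le> 2 * N + 1" "2 * N + 1 \<le> 2 * int n"
    using r(3) \<open>0 < n\<close> unfolding N by linarith+
  show "(x, y) \<in> exceptional n c N m \<union> ladders c N m"
  proof (cases "c + 2 * int m \<le> x + y \<or> x - y \<in> {- N, 2 * N + 1, - 2 * N - 1}")
    case True
    have "0.7 * real n \<le> c" "0.15 * real n - 1 < real m"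
      unfolding c m by linarith+
    then have "real_of_int (int n) \<le> real_of_int (c + 2 * int m + 2)"
      by simp
    with r(2) have "x + y \<le> c + 2 * int m + 2"
      by (simp only: of_int_le_iff)
    moreover have "0 \<le> c"
      unfolding c by simp
    ultimately show ?thesis
      using True \<open>c \<le> x + y\<close> r(2) \<open>\<bar>x - y\<bar> \<le> 2 * N + 1\<close> \<open>2 * N + 1 \<le> 2 * int n\<close>
      by (auto simp: exceptional_def sum_diff_def)
  next
    case False
    with \<open>c \<le> x + y\<close> \<open>\<bar>x - y\<bar> \<le> 2 * N + 1\<close> have "(x, y) \<in> ladders c N m"
      by (intro ladders_cover_lower) auto
    then show ?thesis ..
  qed
qed

lemma Lam_regionL_subset:
  assumes c: "c = \<lceil>0.7 * real n\<rceil>" and N: "N = \<lfloor>0.4 * real n\<rfloor>"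
    and m: "m = nat \<lfloor>0.15 * real n\<rfloor>"
  shows "Lam (regionL n) \<subseteq> exceptional n c N m \<union> ladders c N m"
proof (rule subrelI)
  fix x y assume "(x, y) \<in> Lam (regionL n)"
  then have r: "2 * c \<le> x + y" "x + y \<le> 1.7 * real n" "\<bar>x - y\<bar> \<le> 0.4 * real n"
    unfolding Lam_def regionL_def c by auto
  have "\<bar>x - y\<bar> \<le> N"
    using r(3) unfolding N by linarith
  show "(x, y) \<in> exceptional n c N m \<union> ladders c N m"
  proof (cases "2 * c + 2 * int m - 2 \<le> x + y \<or> x - y = - N")
    case True
    have "0.7 * real n \<le> c" "0.15 * real n - 1 < real m"
      unfolding c m by linarith+
    with r(2) have "real_of_int (x + y) \<le> real_of_int (2 * c + 2 * int m + 2)"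
      by simp
    then have "x + y \<le> 2 * c + 2 * int m + 2"
      by (simp only: of_int_le_iff)
    moreover have "0 \<le> c" "x + y \<le> 2 * int n" "N \<le> 2 * int n"
      using r(2) unfolding c N by linarith+
    ultimately show ?thesis
      using True r(1) \<open>\<bar>x - y\<bar> \<le> N\<close> by (auto simp: exceptional_def sum_diff_def)
  next
    case False
    with r(1) \<open>\<bar>x - y\<bar> \<le> N\<close> have "(x, y) \<in> ladders c N m"
      by (intro ladders_cover_upper) auto
    then show ?thesis ..
  qed
qed

lemma Lam_Un: "Lam (X \<union> Y) = Lam X \<union> Lam Y"
  by (auto simp: Lam_def)

lemma power_le_powr: "1 \<le> x \<Longrightarrow> real k \<le> t \<Longrightarrow> x ^ k \<le> x powr t"
  by (metis powr_mono powr_realpow less_le_trans zero_less_one)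

theorem mainTheorem9:
  shows "\<exists>C::real. \<forall>n::nat. n > 0 \<longrightarrow>
    real (sf (Lam (regionR n \<union> regionL n)))
      \<le> 2 powr (C * real n) * real (s_fun (nat \<lfloor>0.15 * real n\<rfloor>)) powr (0.8 * real n)"
proof (intro exI allI impI)
  fix n :: nat assume "0 < n"
  define c N m where "c = \<lceil>0.7 * real n\<rceil>" and "N = \<lfloor>0.4 * real n\<rfloor>"
    and "m = nat \<lfloor>0.15 * real n\<rfloor>"
  have "Lam (regionR n \<union> regionL n) \<subseteq> exceptional n c N m \<union> ladders c N m"
    using Lam_regionR_subset[OF \<open>0 < n\<close> c_def N_def m_def] Lam_regionL_subset[OF c_def N_def m_def]
    unfolding Lam_Un by blast
  then have "sf (Lam (regionR n \<union> regionL n)) \<le> sf (exceptional n c N m \<union> ladders c N m)"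
    by (intro sf_mono finite_UnI finite_exceptional finite_ladders)
  also have "\<dots> \<le> sf (exceptional n c N m) * sf (ladders c N m)"
    by (rule sf_Un_le[OF finite_exceptional finite_ladders])
  also have "\<dots> \<le> 2 ^ (49 * n) * s_fun m ^ nat (2 * N)"
    using sf_exceptional_le[OF \<open>0 < n\<close>] sf_ladders_le by (rule mult_mono) simp_all
  finally have "real (sf (Lam (regionR n \<union> regionL n)))
      \<le> real (2 ^ (49 * n) * s_fun m ^ nat (2 * N))"
    by (rule of_nat_mono)
  also have "\<dots> = 2 ^ (49 * n) * real (s_fun m) ^ nat (2 * N)"
    by simp
  also have "\<dots> \<le> 2 powr (49 * real n) * real (s_fun m) powr (0.8 * real n)"
  proof (intro mult_mono power_le_powr)
    show "1 \<le> real (s_fun m)"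
      unfolding s_fun_def using sf_pos[of "{1, 3, 4} \<times> {1 .. int m}"] by simp
    show "real (nat (2 * N)) \<le> 0.8 * real n"
      unfolding N_def by linarith
  qed simp_all
  finally show "real (sf (Lam (regionR n \<union> regionL n)))
      \<le> 2 powr (49 * real n) * real (s_fun (nat \<lfloor>0.15 * real n\<rfloor>)) powr (0.8 * real n)"
    unfolding m_def .
qed

end
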